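(* Let $p_{11}\in(0,1)$ and let $\mathcal{B}\subseteq[0,1]$ be countable with $p_{11}\in\mathcal{B}$. Let $\mu$ be a pre-scheduling belief on $\mathbb{R}\times\mathcal{B}$ with $\mu(\cdot,b)\in\mathcal{S}(0)$ for all $b\in\mathcal{B}$, and let $\Gamma:\mathbb{R}\times[0,1]\to\{0,1\}$ be an even and increasing prescription. Then for each $y\in\mathbb{R}\cup\{\Xi\}$ (for $y=\Xi$ assuming the normalizing constant below is positive), the post-scheduling belief $\theta=F^{(2)}(\mu,\Gamma,y)$ satisfies $\theta(\cdot,b)\in\mathcal{S}(0)$ for all $b\in\mathcal{B}$.
   Context: A belief is a nonnegative function $\mu$ on $\mathbb{R}\times\mathcal{B}$ with $\sum_b\int\mu(e,b)\,de=1$; by convention the unit point mass $\delta_{(0,p_{11})}$ at $(e,b)=(0,p_{11})$ is also a belief. For $r\in\mathbb{R}$, $\mathcal{S}(r)$ is the set of functions $\nu:\mathbb{R}\to\mathbb{R}$ with $\nu(x)\ge\nu(y)$ whenever $|x-r|\le|y-r|$; by convention $\delta_r\in\mathcal{S}(r)$. $\Gamma$ is even and increasing if for each $b$, $\Gamma(e,b)=\Gamma(|e|,b)$ and $\Gamma(e,b)$ is non-decreasing in $|e|$. With $p(b,0)=1$, $p(b,1)=1-b$, the update is $F^{(2)}(\mu,\Gamma,y)=\delta_{(0,p_{11})}$ if $y\ne\Xi$, and $F^{(2)}(\mu,\Gamma,\Xi)(e,b)=p(b,\Gamma(e,b))\mu(e,b)/\sum_{b'}\int p(b',\Gamma(e',b'))\mu(e',b')\,de'$.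 $\Xi$ is the symbol "no packet received". *)

theory Defs
  imports "HOL-Analysis.Analysis"
begin

text \<open>Beliefs on R x B: either a density mu(e,b), or the distinguished unit point
mass at (e,b) = (0, p11).\<close>
datatype belief = Dens "real \<Rightarrow> real \<Rightarrow> real" | PtMass

text \<open>Observations: a real value, or Xi (no packet received).\<close>
datatype obs = Val real | Xi

datatype sec = SFun "real \<Rightarrow> real" | SDelta real

definition is_belief :: "real set \<Rightarrow> belief \<Rightarrow> bool" where
  "is_belief B m = (case m of
      PtMass \<Rightarrow> True
    | Dens \<mu> \<Rightarrow> (\<forall>e b. 0 \<le> \<mu> e b)
              \<and> (\<forall>b\<in>B. (\<lambda>e. \<mu> e b) integrable_on UNIV)
              \<and> ((\<lambda>b. integral UNIV (\<lambda>e. \<mu> e b)) has_sum 1) B)"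

definition sect :: "real \<Rightarrow> belief \<Rightarrow> real \<Rightarrow> sec" where
  "sect p11 m b = (case m of
      Dens \<mu> \<Rightarrow> SFun (\<lambda>e. \<mu> e b)
    | PtMass \<Rightarrow> (if b = p11 then SDelta 0 else SFun (\<lambda>e. 0)))"

definition in_S :: "real \<Rightarrow> sec \<Rightarrow> bool" where
  "in_S r s = (case s of
      SFun \<nu> \<Rightarrow> (\<forall>x y. \<bar>x - r\<bar> \<le> \<bar>y - r\<bar> \<longrightarrow> \<nu> y \<le> \<nu> x)
    | SDelta r' \<Rightarrow> r' = r)"

definition even_increasing :: "(real \<Rightarrow> real \<Rightarrow> nat) \<Rightarrow> bool" where
  "even_increasing \<Gamma> = (\<forall>b\<in>{0..1}. (\<forall>e. \<Gamma> e b = \<Gamma> \<bar>e\<bar> b)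
      \<and> (\<forall>e e'. \<bar>e\<bar> \<le> \<bar>e'\<bar> \<longrightarrow> \<Gamma> e b \<le> \<Gamma> e' b))"

definition pfun :: "real \<Rightarrow> nat \<Rightarrow> real" where
  "pfun b g = (if g = 0 then 1 else 1 - b)"

definition norm_const :: "real set \<Rightarrow> real \<Rightarrow> belief \<Rightarrow> (real \<Rightarrow> real \<Rightarrow> nat) \<Rightarrow> real" where
  "norm_const B p11 m \<Gamma> = (case m of
      Dens \<mu> \<Rightarrow> infsum (\<lambda>b. integral UNIV (\<lambda>e. pfun b (\<Gamma> e b) * \<mu> e b)) B
    | PtMass \<Rightarrow> pfun p11 (\<Gamma> 0 p11))"

definition F2 :: "real set \<Rightarrow> real \<Rightarrow> belief \<Rightarrow> (real \<Rightarrow> real \<Rightarrow> nat) \<Rightarrow> obs \<Rightarrow> belief" where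
  "F2 B p11 m \<Gamma> y = (case y of
      Val _ \<Rightarrow> PtMass
    | Xi \<Rightarrow> (case m of
         Dens \<mu> \<Rightarrow> Dens (\<lambda>e b. pfun b (\<Gamma> e b) * \<mu> e b / norm_const B p11 m \<Gamma>)
       | PtMass \<Rightarrow> PtMass))"

end

theory Submission
  imports Defs
begin

text \<open>After an observed packet the belief collapses to the point mass at 0, which lies in S(0).
After no packet the section at b is rescaled by the weight e \<mapsto> p(b, \<Gamma>(e,b)), which is itself
nonnegative and symmetric nonincreasing in e because \<Gamma> is even and increasing and p(b,\<cdot>) is
nonincreasing; a product of nonnegative symmetric nonincreasing functions, divided by a positive
constant, is again symmetric nonincreasing.\<close>

lemma in_S_SFun_mult:
  assumes "in_S r (SFun f)" "in_S r (SFun g)"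
    and "\<And>x. 0 \<le> f x" "\<And>x. 0 \<le> g x"
  shows "in_S r (SFun (\<lambda>x. f x * g x))"
  using assms unfolding in_S_def by (auto intro: mult_mono)

lemma in_S_SFun_divide:
  assumes "in_S r (SFun f)" "0 \<le> c"
  shows "in_S r (SFun (\<lambda>x. f x / c))"
  using assms unfolding in_S_def by (auto intro: divide_right_mono)

lemma pfun_nonneg: "b \<le> 1 \<Longrightarrow> 0 \<le> pfun b g"
  by (simp add: pfun_def)

lemma pfun_antimono: "0 \<le> b \<Longrightarrow> g \<le> g' \<Longrightarrow> pfun b g' \<le> pfun b g"
  by (simp add: pfun_def)

lemma in_S_scheduling_weight:
  assumes "even_increasing \<Gamma>" "b \<in> {0..1}"
  shows "in_S 0 (SFun (\<lambda>e. pfun b (\<Gamma> e b)))"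
proof -
  have "\<Gamma> x b \<le> \<Gamma> z b" if "\<bar>x\<bar> \<le> \<bar>z\<bar>" for x z
    using assms that unfolding even_increasing_def by blast
  then show ?thesis
    using assms(2) by (simp add: in_S_def pfun_antimono)
qed

lemma in_S_sect_PtMass: "in_S 0 (sect p11 PtMass b)"
  by (simp add: sect_def in_S_def)

lemma sect_Dens: "sect p11 (Dens \<mu>) b = SFun (\<lambda>e. \<mu> e b)"
  by (simp add: sect_def)

lemma in_S_sect_F2_Xi_Dens:
  assumes "even_increasing \<Gamma>" "b \<in> {0..1}" "\<forall>e. 0 \<le> \<mu> e b"
    and "in_S 0 (sect p11 (Dens \<mu>) b)" "0 \<le> norm_const B p11 (Dens \<mu>) \<Gamma>"
  shows "in_S 0 (sect p11 (F2 B p11 (Dens \<mu>) \<Gamma> Xi) b)"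
proof -
  have "in_S 0 (SFun (\<lambda>e. pfun b (\<Gamma> e b) * \<mu> e b))"
    using assms by (intro in_S_SFun_mult in_S_scheduling_weight pfun_nonneg)
      (auto simp: sect_Dens)
  then show ?thesis
    using assms(5) by (simp add: F2_def sect_Dens in_S_SFun_divide)
qed

theorem lemma7:
  fixes p11 :: real and B :: "real set" and \<mu> :: belief
    and \<Gamma> :: "real \<Rightarrow> real \<Rightarrow> nat" and y :: obs
  assumes "0 < p11" "p11 < 1"
    and "countable B" "B \<subseteq> {0..1}" "p11 \<in> B"
    and "is_belief B \<mu>"
    and "\<forall>b\<in>B. in_S 0 (sect p11 \<mu> b)"
    and "\<forall>e b. \<Gamma> e b \<in> {0, 1}"
    and "even_increasing \<Gamma>"
    and "y = Xi \<longrightarrow> norm_const B p11 \<mu> \<Gamma> > 0"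
  shows "\<forall>b\<in>B. in_S 0 (sect p11 (F2 B p11 \<mu> \<Gamma> y) b)"
proof
  fix b assume "b \<in> B"
  show "in_S 0 (sect p11 (F2 B p11 \<mu> \<Gamma> y) b)"
  proof (cases "y = Xi")
    case False
    then show ?thesis by (cases y) (simp_all add: F2_def in_S_sect_PtMass)
  next
    case True
    show ?thesis
    proof (cases \<mu>)
      case PtMass
      then show ?thesis using True by (simp add: F2_def in_S_sect_PtMass)
    next
      case (Dens m)
      have "\<forall>e. 0 \<le> m e b"
        using assms(6) Dens by (simp add: is_belief_def)
      moreover have "b \<in> {0..1}"
        using assms(4) \<open>b \<in> B\<close> by blast
      ultimately show ?thesis
        using assms(7,9,10) \<open>b \<in> B\<close> True Dens
        by (simp add: in_S_sect_F2_Xi_Dens less_imp_le)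
    qed
  qed
qed

end
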